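(* Let $f:2^V\to\mathbb{R}$ be a submodular function such that $h^f_{\tau\sigma}=\tau h^f_\sigma$ for all permutations $\sigma,\tau$ of $V$. Let $\mathcal D\subseteq[0,1]^n$ be a Lebesgue measurable set that is symmetric under permutations, i.e. $x\sigma\in\mathcal D$ whenever $x\in\mathcal D$ and $\sigma$ is a permutation, where $(x\sigma)(i)=x(\sigma(i))$. For $\theta\ge 0$ and a permutation $\sigma$ define $$Z(\theta,\sigma)=\int_{\mathcal D}\exp\big(-\theta\, d_{\hat f}(x\|\sigma)\big)\,dx.$$ Then $Z(\theta,\sigma)$ does not depend on $\sigma$: $Z(\theta,\sigma)=Z(\theta,\sigma')$ for all permutations $\sigma,\sigma'$ of $V$.
   Context: Let $V=\{1,\dots,n\}$. A permutation $\sigma$ is a bijection $V\to V$, where $\sigma(i)$ is the element placed at rank $i$. Composition: $(\tau\sigma)(i)=\tau(\sigma(i))$. For a vector $x$ and permutation $\tau$, $(\tau x)(i)=x(\tau^{-1}(i))$. Write $S^\sigma_0=\emptyset$, $S^\sigma_j=\{\sigma(1),\dots,\sigma(j)\}$. For $f:2^V\to\mathbb{R}$ define $h^f_\sigma\in\mathbb{R}^n$ by $h^f_\sigma(\sigma(j))=f(S^\sigma_j)-f(S^\sigma_{j-1})$. For $x\in\mathbb{R}^n$, $\sigma_x$ orders $x$ if $x(\sigma_x(1))\ge\cdots\ge x(\sigma_x(n))$; the Lovász extension is $\hat f(x)=\langle x,h^f_{\sigma_x}\rangle$ (independent of the choice of $\sigma_x$). The LB divergence is $d_{\hat f}(x\|\sigma)=\hat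 f(x)-\langle x,h^f_\sigma\rangle$ for $x\in[0,1]^n$. *)

theory Defs
  imports "HOL-Analysis.Analysis" "HOL-Probability.Probability"
begin

text \<open>Ground set V = {1..n}; vectors in R^n are functions nat => real (indices 1..n).\<close>

definition submodular :: "nat \<Rightarrow> (nat set \<Rightarrow> real) \<Rightarrow> bool" where
  "submodular n f \<longleftrightarrow>
     (\<forall>A B. A \<subseteq> {1..n} \<longrightarrow> B \<subseteq> {1..n} \<longrightarrow> f (A \<union> B) + f (A \<inter> B) \<le> f A + f B)"

definition prefix_set :: "(nat \<Rightarrow> nat) \<Rightarrow> nat \<Rightarrow> nat set" where
  "prefix_set \<sigma> j = \<sigma> ` {1..j}"

text \<open>h^f_sigma(sigma(j)) = f(S_j) - f(S_{j-1}); zero outside V.\<close>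
definition hvec :: "nat \<Rightarrow> (nat set \<Rightarrow> real) \<Rightarrow> (nat \<Rightarrow> nat) \<Rightarrow> nat \<Rightarrow> real" where
  "hvec n f \<sigma> i = (if i \<in> {1..n} then
      f (prefix_set \<sigma> (inv \<sigma> i)) - f (prefix_set \<sigma> (inv \<sigma> i - 1)) else 0)"

definition inner_n :: "nat \<Rightarrow> (nat \<Rightarrow> real) \<Rightarrow> (nat \<Rightarrow> real) \<Rightarrow> real" where
  "inner_n n x y = (\<Sum>i\<in>{1..n}. x i * y i)"

definition orders :: "nat \<Rightarrow> (nat \<Rightarrow> real) \<Rightarrow> (nat \<Rightarrow> nat) \<Rightarrow> bool" where
  "orders n x \<sigma> \<longleftrightarrow> \<sigma> permutes {1..n} \<and>
     (\<forall>i j. 1 \<le> i \<longrightarrow> i \<le> j \<longrightarrow> j \<le> n \<longrightarrow> x (\<sigma> j) \<le> x (\<sigma> i))"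

definition lovasz :: "nat \<Rightarrow> (nat set \<Rightarrow> real) \<Rightarrow> (nat \<Rightarrow> real) \<Rightarrow> real" where
  "lovasz n f x = inner_n n x (hvec n f (SOME \<sigma>. orders n x \<sigma>))"

definition lb_div :: "nat \<Rightarrow> (nat set \<Rightarrow> real) \<Rightarrow> (nat \<Rightarrow> real) \<Rightarrow> (nat \<Rightarrow> nat) \<Rightarrow> real" where
  "lb_div n f x \<sigma> = lovasz n f x - inner_n n x (hvec n f \<sigma>)"

definition lebesgue_n :: "nat \<Rightarrow> (nat \<Rightarrow> real) measure" where
  "lebesgue_n n = completion (Pi\<^sub>M {1..n} (\<lambda>_. lborel))"

definition Zfun :: "nat \<Rightarrow> (nat set \<Rightarrow> real) \<Rightarrow> (nat \<Rightarrow> real) set \<Rightarrow> real \<Rightarrow> (nat \<Rightarrow> nat) \<Rightarrow> real" where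
  "Zfun n f D \<theta> \<sigma> = (LINT x:D|lebesgue_n n. exp (- \<theta> * lb_div n f x \<sigma>))"

end

theory Submission
  imports Defs
begin

text \<open>
  Substitute \<open>x \<mapsto> x \<circ> t\<close> with \<open>t = \<sigma>' \<circ> \<sigma>\<inverse>\<close>: this preserves Lebesgue measure and the
  symmetric domain \<open>D\<close>. By equivariance \<open>h\<^bsub>\<sigma>\<^esub>\<close> is \<open>h\<^bsub>id\<^esub>\<close> relabelled along \<open>\<sigma>\<close>, so the Lovasz
  extension of \<open>x\<close> only depends on the sorted values of \<open>x\<close> and is invariant under \<open>x \<mapsto> x \<circ> t\<close>,
  while \<open>\<langle>x \<circ> t, h\<^bsub>\<sigma>\<^esub>\<rangle> = \<langle>x, h\<^bsub>t \<circ> \<sigma>\<^esub>\<rangle>\<close>. Hence the integrand for \<open>\<sigma>\<close> at \<open>x \<circ> t\<close> is the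
  integrand for \<open>\<sigma>'\<close> at \<open>x\<close>.
\<close>

lemma measurable_permute_coordinates:
  assumes t: "t permutes I"
  shows "(\<lambda>x i. x (t i)) \<in> Pi\<^sub>M I (\<lambda>_. M) \<rightarrow>\<^sub>M Pi\<^sub>M I (\<lambda>_. M)"
proof (rule measurable_PiM_single')
  fix i assume "i \<in> I"
  then show "(\<lambda>x. x (t i)) \<in> Pi\<^sub>M I (\<lambda>_. M) \<rightarrow>\<^sub>M M"
    using permutes_in_image[OF t] by (intro measurable_component_singleton) simp
qed (use permutes_in_image[OF t] t in \<open>auto simp: space_PiM PiE_def extensional_def permutes_def\<close>)

lemma permute_coordinates_vimage_PiE:
  assumes t: "t permutes I" and A: "\<And>i. i \<in> I \<Longrightarrow> A i \<subseteq> space M"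
  shows "(\<lambda>x i. x (t i)) -` Pi\<^sub>E I A \<inter> space (Pi\<^sub>M I (\<lambda>_. M)) = Pi\<^sub>E I (\<lambda>i. A (inv t i))"
proof -
  have "(\<forall>i\<in>I. x (t i) \<in> A i) \<longleftrightarrow> (\<forall>i\<in>I. x i \<in> A (inv t i))" for x
    by (metis permutes_in_image[OF t] permutes_inverses[OF t] permutes_inv[OF t])
  moreover have "x \<in> extensional I \<Longrightarrow> (\<lambda>i. x (t i)) \<in> extensional I" for x
    using t by (simp add: extensional_def permutes_def)
  moreover have "x i \<in> space M" if "i \<in> I" "x i \<in> A (inv t i)" for x i
    using that A permutes_in_image[OF permutes_inv[OF t]] by blast
  ultimately show ?thesis
    by (auto simp: space_PiM PiE_iff)
qed

lemma distr_PiM_permute_coordinates: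
  fixes M :: "'a measure"
  assumes "sigma_finite_measure M" "finite I" and t: "t permutes I"
  shows "distr (Pi\<^sub>M I (\<lambda>_. M)) (Pi\<^sub>M I (\<lambda>_. M)) (\<lambda>x i. x (t i)) = Pi\<^sub>M I (\<lambda>_. M)"
proof -
  interpret product_sigma_finite "\<lambda>_. M"
    using assms(1) by (simp add: product_sigma_finite_def)
  show ?thesis
  proof (rule PiM_eqI)
    fix A assume A: "\<And>i. i \<in> I \<Longrightarrow> A i \<in> sets M"
    have "emeasure (distr (Pi\<^sub>M I (\<lambda>_. M)) (Pi\<^sub>M I (\<lambda>_. M)) (\<lambda>x i. x (t i))) (Pi\<^sub>E I A)
        = emeasure (Pi\<^sub>M I (\<lambda>_. M)) (Pi\<^sub>E I (\<lambda>i. A (inv t i)))"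
      using A by (simp add: emeasure_distr measurable_permute_coordinates[OF t]
          permute_coordinates_vimage_PiE[OF t] sets.sets_into_space sets_PiM_I_finite assms(2))
    also have "\<dots> = (\<Prod>i\<in>I. emeasure M (A (inv t i)))"
      using A permutes_in_image[OF permutes_inv[OF t]] by (intro emeasure_PiM assms(2)) auto
    also have "\<dots> = (\<Prod>i\<in>I. emeasure M (A i))"
      using prod.permute[OF permutes_inv[OF t], of "\<lambda>i. emeasure M (A i)"] by (simp add: comp_def)
    finally show "emeasure (distr (Pi\<^sub>M I (\<lambda>_. M)) (Pi\<^sub>M I (\<lambda>_. M)) (\<lambda>x i. x (t i))) (Pi\<^sub>E I A)
        = (\<Prod>i\<in>I. emeasure M (A i))" .
  qed (simp_all add: assms(2))
qed

lemma
  assumes T: "T \<in> M \<rightarrow>\<^sub>M M" and inv: "distr M M T = M"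
  shows measurable_completion_invariant: "T \<in> completion M \<rightarrow>\<^sub>M completion M"
    and distr_completion_invariant: "distr (completion M) (completion M) T = completion M"
proof -
  have distr_eq: "distr (completion M) M T = M"
    using T inv by (simp add: distr_completion)
  show "T \<in> completion M \<rightarrow>\<^sub>M completion M"
    using measurable_completion[OF T] distr_eq by (intro completion.measurable_completion2) simp_all
  have "completion (distr (completion M) M T) = distr (completion M) (completion M) T"
    using measurable_completion[OF T] distr_eq by (intro completion.completion_distr_eq) simp_all
  then show "distr (completion M) (completion M) T = completion M"
    by (simp add: distr_eq)
qed

lemma integral_invariant_transform:
  fixes g :: "'a \<Rightarrow> 'b::{banach, second_countable_topology}"
  assumes T: "T \<in> M \<rightarrow>\<^sub>M M" and inv: "distr M M T = M"
    and S: "S \<in> M \<rightarrow>\<^sub>M M" and TS: "\<And>x. T (S x) = x"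
  shows "(\<integral>x. g (T x) \<partial>M) = (\<integral>x. g x \<partial>M)"
\<comment> \<open>\<open>S\<close> is needed for the non-measurable case, where both integrals are \<open>0\<close> by convention.\<close>
proof (cases "g \<in> borel_measurable M")
  case True
  then show ?thesis
    using integral_distr[OF T True] inv by simp
next
  case False
  have "(\<lambda>x. g (T x)) \<notin> borel_measurable M"
  proof
    assume "(\<lambda>x. g (T x)) \<in> borel_measurable M"
    from measurable_comp[OF S this] show False
      using False by (simp add: comp_def TS)
  qed
  then show ?thesis
    using False by (metis borel_measurable_integrable not_integrable_integral_eq)
qed

lemma
  assumes t: "t permutes {1..n}"
  shows measurable_lebesgue_n_permute_coordinates:
      "(\<lambda>x i. x (t i)) \<in> lebesgue_n n \<rightarrow>\<^sub>M lebesgue_n n"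
    and distr_lebesgue_n_permute_coordinates:
      "distr (lebesgue_n n) (lebesgue_n n) (\<lambda>x i. x (t i)) = lebesgue_n n"
proof -
  let ?P = "Pi\<^sub>M {1..n} (\<lambda>_. lborel :: real measure)"
  have "(\<lambda>x i. x (t i)) \<in> ?P \<rightarrow>\<^sub>M ?P" "distr ?P ?P (\<lambda>x i. x (t i)) = ?P"
    using measurable_permute_coordinates[OF t] distr_PiM_permute_coordinates[OF lborel.sigma_finite_measure_axioms _ t]
    by simp_all
  then show "(\<lambda>x i. x (t i)) \<in> lebesgue_n n \<rightarrow>\<^sub>M lebesgue_n n"
      "distr (lebesgue_n n) (lebesgue_n n) (\<lambda>x i. x (t i)) = lebesgue_n n"
    unfolding lebesgue_n_def by (rule measurable_completion_invariant distr_completion_invariant)+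
qed

lemma integral_lebesgue_n_permute_coordinates:
  fixes g :: "(nat \<Rightarrow> real) \<Rightarrow> real"
  assumes t: "t permutes {1..n}"
  shows "(\<integral>x. g (\<lambda>i. x (t i)) \<partial>lebesgue_n n) = (\<integral>x. g x \<partial>lebesgue_n n)"
  by (intro integral_invariant_transform[where S = "\<lambda>x i. x (inv t i)"]
      measurable_lebesgue_n_permute_coordinates distr_lebesgue_n_permute_coordinates
      permutes_inv[OF t] t)
    (simp add: permutes_inverses(2)[OF t])

lemma orders_sorted_values:
  assumes "orders n x r"
  shows "map (\<lambda>j. - x (r j)) [1..<n+1] = sort (map (\<lambda>i. - x i) [1..<n+1])"
proof (rule properties_for_sort[symmetric])
  have r: "r permutes {1..n}"
    using assms by (simp add: orders_def)
  have "mset (map (\<lambda>j. - x (r j)) [1..<n+1]) = image_mset (\<lambda>i. - x i) (image_mset r (mset_set {1..n}))"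
    by (simp add: mset_upt atLeastLessThanSuc_atLeastAtMost multiset.map_comp comp_def del: upt_Suc)
  also have "image_mset r (mset_set {1..n}) = mset_set (r ` {1..n})"
    by (simp add: image_mset_mset_set permutes_inj_on[OF r])
  also have "r ` {1..n} = {1..n}"
    by (rule permutes_image[OF r])
  finally show "mset (map (\<lambda>j. - x (r j)) [1..<n+1]) = mset (map (\<lambda>i. - x i) [1..<n+1])"
    by (simp add: mset_upt atLeastLessThanSuc_atLeastAtMost del: upt_Suc)
  show "sorted (map (\<lambda>j. - x (r j)) [1..<n+1])"
    using assms by (auto simp: sorted_iff_nth_mono orders_def nth_upt simp del: upt_Suc)
qed

lemma orders_values_unique:
  assumes "orders n x r" "orders n x r'" "j \<in> {1..n}"
  shows "x (r j) = x (r' j)"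
proof -
  have "map (\<lambda>j. - x (r j)) [1..<n+1] ! (j - 1) = map (\<lambda>j. - x (r' j)) [1..<n+1] ! (j - 1)"
    using orders_sorted_values[OF assms(1)] orders_sorted_values[OF assms(2)] by simp
  moreover obtain k where "j = Suc k" "k < n"
    using assms(3) by (cases j) auto
  ultimately show ?thesis
    by (simp del: upt_Suc)
qed

lemma orders_exists: "\<exists>r. orders n x r"
proof -
  define ys where "ys = sort_key (\<lambda>i. - x i) [1..<n+1]"
  have len: "length ys = n" and dist: "distinct ys" and set: "set ys = {1..n}"
    by (auto simp: ys_def)
  define r where "r j = (if j \<in> {1..n} then ys ! (j - 1) else j)" for j
  have "bij_betw (\<lambda>k. ys ! k) {..<n} {1..n}"
    using bij_betw_nth[OF dist] len set by (simp add: lessThan_atLeast0)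
  moreover have "bij_betw (\<lambda>j. j - 1) {1..n} {..<n}"
    by (rule bij_betw_byWitness[where f' = Suc]) auto
  ultimately have "bij_betw ((\<lambda>k. ys ! k) \<circ> (\<lambda>j. j - 1)) {1..n} {1..n}"
    by (rule bij_betw_trans[rotated])
  then have "bij_betw r {1..n} {1..n}"
    by (rule bij_betw_cong[THEN iffD1, rotated]) (simp add: r_def)
  then have perm: "r permutes {1..n}"
    by (rule bij_imp_permutes) (auto simp: r_def)
  have "x (r j) \<le> x (r i)" if "1 \<le> i" "i \<le> j" "j \<le> n" for i j
    using sorted_nth_mono[of "map (\<lambda>i. - x i) ys" "i - 1" "j - 1"] that len
    by (simp add: ys_def r_def)
  with perm show ?thesis
    unfolding orders_def by blast
qed

lemma inner_n_permute:
  assumes t: "t permutes {1..n}"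
  shows "inner_n n (\<lambda>i. x (t i)) h = inner_n n x (\<lambda>i. h (inv t i))"
  using sum.permute[OF t, of "\<lambda>i. x i * h (inv t i)"]
  by (simp add: inner_n_def comp_def permutes_inverses(2)[OF t])

lemma lovasz_eq_ordered_sum:
  assumes hvec_eq: "\<And>\<tau>. \<tau> permutes {1..n} \<Longrightarrow> hvec n f \<tau> = (\<lambda>i. hvec n f id (inv \<tau> i))"
    and r: "orders n x r"
  shows "lovasz n f x = (\<Sum>j\<in>{1..n}. x (r j) * hvec n f id j)"
proof -
  define r0 where "r0 = (SOME r. orders n x r)"
  have r0: "orders n x r0"
    unfolding r0_def by (rule someI_ex[OF orders_exists])
  then have r0_perm: "r0 permutes {1..n}"
    by (simp add: orders_def)
  have "lovasz n f x = inner_n n x (\<lambda>i. hvec n f id (inv r0 i))"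
    by (simp only: lovasz_def r0_def[symmetric] hvec_eq[OF r0_perm])
  also have "\<dots> = inner_n n (\<lambda>j. x (r0 j)) (hvec n f id)"
    by (rule inner_n_permute[OF r0_perm, symmetric])
  also have "\<dots> = (\<Sum>j\<in>{1..n}. x (r j) * hvec n f id j)"
    unfolding inner_n_def using orders_values_unique[OF r0 r] by simp
  finally show ?thesis .
qed

lemma lovasz_permute:
  assumes hvec_eq: "\<And>\<tau>. \<tau> permutes {1..n} \<Longrightarrow> hvec n f \<tau> = (\<lambda>i. hvec n f id (inv \<tau> i))"
    and t: "t permutes {1..n}"
  shows "lovasz n f (\<lambda>i. x (t i)) = lovasz n f x"
proof -
  obtain r where r: "orders n x r"
    using orders_exists by blast
  then have "orders n (\<lambda>i. x (t i)) (inv t \<circ> r)"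
    using permutes_compose[OF _ permutes_inv[OF t], of r] permutes_inverses(1)[OF t]
    by (auto simp: orders_def)
  then show ?thesis
    using lovasz_eq_ordered_sum[OF hvec_eq] r permutes_inverses(1)[OF t] by simp
qed

lemma lb_div_permute:
  assumes hvec_equivariant: "\<And>\<sigma> \<tau>. \<sigma> permutes {1..n} \<Longrightarrow> \<tau> permutes {1..n} \<Longrightarrow>
           hvec n f (\<tau> \<circ> \<sigma>) = (\<lambda>i. hvec n f \<sigma> (inv \<tau> i))"
    and t: "t permutes {1..n}" and \<sigma>: "\<sigma> permutes {1..n}"
  shows "lb_div n f (\<lambda>i. x (t i)) \<sigma> = lb_div n f x (t \<circ> \<sigma>)"
proof -
  have "hvec n f \<tau> = (\<lambda>i. hvec n f id (inv \<tau> i))" if "\<tau> permutes {1..n}" for \<tau>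
    using hvec_equivariant[OF permutes_id that] by (metis comp_id)
  then have "lovasz n f (\<lambda>i. x (t i)) = lovasz n f x"
    by (rule lovasz_permute[OF _ t])
  then show ?thesis
    by (simp add: lb_div_def inner_n_permute[OF t] hvec_equivariant[OF \<sigma> t])
qed

theorem mainTheorem12:
  fixes n :: nat and f :: "nat set \<Rightarrow> real" and D :: "(nat \<Rightarrow> real) set" and \<theta> :: real
  assumes "submodular n f"
    and "\<And>\<sigma> \<tau>. \<sigma> permutes {1..n} \<Longrightarrow> \<tau> permutes {1..n} \<Longrightarrow>
           hvec n f (\<tau> \<circ> \<sigma>) = (\<lambda>i. hvec n f \<sigma> (inv \<tau> i))"
    and "D \<subseteq> PiE {1..n} (\<lambda>_. {0..1})"
    and "D \<in> sets (lebesgue_n n)"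
    and "\<And>x \<sigma>. x \<in> D \<Longrightarrow> \<sigma> permutes {1..n} \<Longrightarrow> (\<lambda>i. x (\<sigma> i)) \<in> D"
    and "\<theta> \<ge> 0"
    and "\<sigma> permutes {1..n}" and "\<sigma>' permutes {1..n}"
  shows "Zfun n f D \<theta> \<sigma> = Zfun n f D \<theta> \<sigma>'"
proof -
  define t where "t = \<sigma>' \<circ> inv \<sigma>"
  have t: "t permutes {1..n}"
    unfolding t_def using assms(7,8) by (intro permutes_compose permutes_inv)
  have t_\<sigma>: "t \<circ> \<sigma> = \<sigma>'"
    unfolding t_def using permutes_inverses(2)[OF assms(7)] by (simp add: fun_eq_iff)
  have D_permute: "(\<lambda>i. x (t i)) \<in> D \<longleftrightarrow> x \<in> D" for x
    using assms(5)[OF _ t, of x] assms(5)[OF _ permutes_inv[OF t], of "\<lambda>i. x (t i)"]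
    by (auto simp: permutes_inverses(1)[OF t])
  have lb_div_shift: "lb_div n f (\<lambda>i. x (t i)) \<sigma> = lb_div n f x \<sigma>'" for x
    using lb_div_permute[OF assms(2) t assms(7)] t_\<sigma> by simp
  have "Zfun n f D \<theta> \<sigma> = (\<integral>x. indicator D x *\<^sub>R exp (- \<theta> * lb_div n f x \<sigma>) \<partial>lebesgue_n n)"
    by (simp add: Zfun_def set_lebesgue_integral_def)
  also have "\<dots> = (\<integral>x. indicator D (\<lambda>i. x (t i)) *\<^sub>R exp (- \<theta> * lb_div n f (\<lambda>i. x (t i)) \<sigma>)
      \<partial>lebesgue_n n)"
    by (rule integral_lebesgue_n_permute_coordinates[OF t, symmetric])
  also have "\<dots> = (\<integral>x. indicator D x *\<^sub>R exp (- \<theta> * lb_div n f x \<sigma>') \<partial>lebesgue_n n)"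
    by (simp only: D_permute lb_div_shift indicator_def)
  also have "\<dots> = Zfun n f D \<theta> \<sigma>'"
    by (simp add: Zfun_def set_lebesgue_integral_def)
  finally show ?thesis .
qed

end
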